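(* Let $V:\mathbb R^3\to\mathbb R$ be in $L^\infty_{loc}(\mathbb R^3)$ with $\operatorname{ess\,inf}V>0$, and let $\varepsilon>0$. If $\{u_n\}\subset\mathcal M_\varepsilon$ is bounded in $W_\varepsilon$, then $\{u_n\}$ cannot converge to zero in $L^{12/5}(\mathbb R^3)$.
   Context: $W_\varepsilon:=\{u\in H^1(\mathbb R^3):\int_{\mathbb R^3}V(\varepsilon x)u^2<\infty\}$ with norm $\|u\|_{W_\varepsilon}^2=\int|\nabla u|^2+\int V(\varepsilon x)u^2$. For $u\in H^1(\mathbb R^3)$, $\phi_u(x)=\int_{\mathbb R^3}\frac{1-e^{-|x-y|}}{|x-y|}u^2(y)\,dy$, and $\mathcal M_\varepsilon=\{u\in W_\varepsilon:\int_{\mathbb R^3}\phi_uu^2=1\}$. *)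

theory Defs
  imports "HOL-Analysis.Analysis"
begin

type_synonym R3 = "real^3"

definition test_fun :: "(R3 \<Rightarrow> real) \<Rightarrow> (R3 \<Rightarrow> R3) \<Rightarrow> bool" where
  "test_fun \<phi> D\<phi> \<longleftrightarrow>
     (\<forall>x. (\<phi> has_derivative (\<lambda>h. D\<phi> x \<bullet> h)) (at x)) \<and>
     continuous_on UNIV D\<phi> \<and> bounded {x. \<phi> x \<noteq> 0}"

definition weak_gradient :: "(R3 \<Rightarrow> real) \<Rightarrow> (R3 \<Rightarrow> R3) \<Rightarrow> bool" where
  "weak_gradient u G \<longleftrightarrow>
     u \<in> borel_measurable lebesgue \<and> G \<in> borel_measurable lebesgue \<and>
     (\<forall>\<phi> D\<phi>. test_fun \<phi> D\<phi> \<longrightarrow>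
        (\<forall>i. integrable lebesgue (\<lambda>x. u x * (D\<phi> x $ i)) \<and>
             integrable lebesgue (\<lambda>x. G x $ i * \<phi> x) \<and>
             (LINT x|lebesgue. u x * (D\<phi> x $ i)) = - (LINT x|lebesgue. G x $ i * \<phi> x)))"

definition H1 :: "(R3 \<Rightarrow> real) set" where
  "H1 = {u. integrable lebesgue (\<lambda>x. (u x)\<^sup>2) \<and>
            (\<exists>G. weak_gradient u G \<and> integrable lebesgue (\<lambda>x. (norm (G x))\<^sup>2))}"

definition W_space :: "(R3 \<Rightarrow> real) \<Rightarrow> real \<Rightarrow> (R3 \<Rightarrow> real) set" where
  "W_space V \<epsilon> = {u \<in> H1. integrable lebesgue (\<lambda>x. V (\<epsilon> *\<^sub>R x) * (u x)\<^sup>2)}"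

text \<open>Squared W_eps norm; the weak gradient is unique a.e., so the choice is irrelevant.\<close>
definition W_norm_sq :: "(R3 \<Rightarrow> real) \<Rightarrow> real \<Rightarrow> (R3 \<Rightarrow> real) \<Rightarrow> real" where
  "W_norm_sq V \<epsilon> u =
     (LINT x|lebesgue. (norm ((SOME G. weak_gradient u G) x))\<^sup>2) +
     (LINT x|lebesgue. V (\<epsilon> *\<^sub>R x) * (u x)\<^sup>2)"

definition phi_pot :: "(R3 \<Rightarrow> real) \<Rightarrow> R3 \<Rightarrow> real" where
  "phi_pot u x = (LINT y|lebesgue. (1 - exp (- dist x y)) / dist x y * (u y)\<^sup>2)"

definition M_set :: "(R3 \<Rightarrow> real) \<Rightarrow> real \<Rightarrow> (R3 \<Rightarrow> real) set" where
  "M_set V \<epsilon> = {u \<in> W_space V \<epsilon>. (LINT x|lebesgue. phi_pot u x * (u x)\<^sup>2) = 1}"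

definition Linf_loc :: "(R3 \<Rightarrow> real) \<Rightarrow> bool" where
  "Linf_loc V \<longleftrightarrow> V \<in> borel_measurable lebesgue \<and>
     (\<forall>K. compact K \<longrightarrow> (\<exists>M. AE x in lebesgue. x \<in> K \<longrightarrow> \<bar>V x\<bar> \<le> M))"

definition ess_inf_pos :: "(R3 \<Rightarrow> real) \<Rightarrow> bool" where
  "ess_inf_pos V \<longleftrightarrow> (\<exists>c>0. AE x in lebesgue. c \<le> V x)"

end

theory Submission
  imports Defs
begin

text \<open>
  Since V \<ge> c > 0 a.e., a bound on the W_\<epsilon>-norm bounds \<integral>u^2 by some A. The kernel
  K(r) = (1 - e^(-r))/r is at most 1/R for r \<ge> R and at most 1 for r < R; in the latter region
  a^2 \<le> s + s^(1-p/2) |a|^p for p \<ge> 2, so that uniformly in x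
    \<phi>_u(x) \<le> A/R + (4\<pi>/3) R^3 s + s^(1-p/2) \<integral>|u|^p.
  Integrating against u^2 and using \<integral>\<phi>_u u^2 = 1 gives 1 \<le> A (\<dots>). Once R and s are chosen so
  that the first two terms contribute at most 1/4 each, \<integral>|u|^p is bounded below by a positive
  constant depending only on A and p; the theorem is the case p = 12/5.
\<close>

lemma AE_lebesgue_scaleR:
  fixes P :: "'a::euclidean_space \<Rightarrow> bool"
  assumes "AE x in lebesgue. P x" and "c \<noteq> 0"
  shows "AE x in lebesgue. P (c *\<^sub>R x)"
proof -
  obtain N where N: "N \<in> null_sets lebesgue" "{x. \<not> P x} \<subseteq> N"
    using assms(1) by (auto simp: eventually_ae_filter)
  have "negligible ((\<lambda>x. (1/c) *\<^sub>R x) ` N)"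
    using N(1) by (intro negligible_differentiable_image_negligible)
      (auto simp: negligible_iff_null_sets intro!: derivative_intros)
  moreover have "x \<in> (\<lambda>x. (1/c) *\<^sub>R x) ` N" if "\<not> P (c *\<^sub>R x)" for x
    using that N(2) assms(2) by (intro image_eqI[of x _ "c *\<^sub>R x"]) auto
  ultimately show ?thesis
    by (intro AE_I'[of "(\<lambda>x. (1/c) *\<^sub>R x) ` N"]) (auto simp: negligible_iff_null_sets)
qed

lemma square_le_add_powr:
  fixes a s p :: real
  assumes "2 \<le> p" and "0 < s"
  shows "a\<^sup>2 \<le> s + s powr (1 - p/2) * \<bar>a\<bar> powr p"
proof (cases "a\<^sup>2 \<le> s")
  case True
  then show ?thesis by (simp add: add_increasing2)
next
  case False
  have "a\<^sup>2 = \<bar>a\<bar> powr 2"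
    using False assms(2) by (simp add: powr_numeral)
  then have "(a\<^sup>2) powr (p/2) = \<bar>a\<bar> powr (2 * (p/2))"
    by (simp only: powr_powr)
  then have "\<bar>a\<bar> powr p = (a\<^sup>2) powr (p/2)"
    by simp
  also have "\<dots> = a\<^sup>2 * (a\<^sup>2) powr (p/2 - 1)"
    using False assms(2) by (simp add: powr_diff)
  finally have "\<bar>a\<bar> powr p = a\<^sup>2 * (a\<^sup>2) powr (p/2 - 1)" .
  moreover have "s powr (p/2 - 1) \<le> (a\<^sup>2) powr (p/2 - 1)"
    using False assms by (intro powr_mono2) auto
  ultimately have "a\<^sup>2 * s powr (p/2 - 1) \<le> \<bar>a\<bar> powr p"
    by (simp add: mult_left_mono)
  have "s powr (1 - p/2) * s powr (p/2 - 1) = 1"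
    using assms(2) by (simp flip: powr_add)
  then have "a\<^sup>2 = s powr (1 - p/2) * (a\<^sup>2 * s powr (p/2 - 1))"
    by (metis mult.left_commute mult_1_right)
  also have "\<dots> \<le> s powr (1 - p/2) * \<bar>a\<bar> powr p"
    using \<open>a\<^sup>2 * s powr (p/2 - 1) \<le> \<bar>a\<bar> powr p\<close> by (rule mult_left_mono) simp
  finally have "a\<^sup>2 \<le> s powr (1 - p/2) * \<bar>a\<bar> powr p" .
  then show ?thesis using assms(2) by simp
qed

lemma integral_square_le_W_norm_sq:
  assumes "AE x in lebesgue. c \<le> V x" and "\<epsilon> \<noteq> 0" and "u \<in> W_space V \<epsilon>"
  shows "c * (LINT x|lebesgue. (u x)\<^sup>2) \<le> W_norm_sq V \<epsilon> u"
proof -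
  have u_L2: "integrable lebesgue (\<lambda>x. (u x)\<^sup>2)"
    and Vu_L1: "integrable lebesgue (\<lambda>x. V (\<epsilon> *\<^sub>R x) * (u x)\<^sup>2)"
    using assms(3) by (auto simp: W_space_def H1_def)
  have "c * (LINT x|lebesgue. (u x)\<^sup>2) = (LINT x|lebesgue. c * (u x)\<^sup>2)"
    by simp
  also have "\<dots> \<le> (LINT x|lebesgue. V (\<epsilon> *\<^sub>R x) * (u x)\<^sup>2)"
    using AE_lebesgue_scaleR[OF assms(1,2)] u_L2 Vu_L1
    by (intro integral_mono_AE) (auto elim!: eventually_mono intro: mult_right_mono)
  also have "\<dots> \<le> W_norm_sq V \<epsilon> u"
    unfolding W_norm_sq_def by (simp add: integral_nonneg_AE)
  finally show ?thesis .
qed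

lemma bopp_podolsky_kernel_nonneg: "0 \<le> d \<Longrightarrow> 0 \<le> (1 - exp (- d)) / d"
  for d :: real
  by simp

lemma bopp_podolsky_kernel_le_one: "0 \<le> d \<Longrightarrow> (1 - exp (- d)) / d \<le> 1"
  for d :: real
  using exp_ge_add_one_self[of "- d"] by (cases "d = 0") (auto simp: divide_le_eq)

lemma bopp_podolsky_kernel_le_inverse: "0 < d \<Longrightarrow> (1 - exp (- d)) / d \<le> 1 / d"
  for d :: real
  by (simp add: divide_right_mono)

lemma bopp_podolsky_kernel_mult_square_le:
  fixes d R s p a :: real
  assumes "0 \<le> d" and "0 < R" and "0 < s" and "2 \<le> p"
  shows "(1 - exp (- d)) / d * a\<^sup>2 \<le> a\<^sup>2 / R + (if d < R then s else 0) + s powr (1 - p/2) * \<bar>a\<bar> powr p"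
proof (cases "d < R")
  case True
  have "(1 - exp (- d)) / d * a\<^sup>2 \<le> 1 * a\<^sup>2"
    using bopp_podolsky_kernel_le_one[OF assms(1)] by (intro mult_right_mono) auto
  also have "\<dots> \<le> s + s powr (1 - p/2) * \<bar>a\<bar> powr p"
    using square_le_add_powr[OF assms(4,3)] by simp
  finally have "(1 - exp (- d)) / d * a\<^sup>2 \<le> s + s powr (1 - p/2) * \<bar>a\<bar> powr p" .
  moreover have "0 \<le> a\<^sup>2 / R"
    using assms(2) by simp
  ultimately show ?thesis
    using True by simp
next
  case False
  then have "(1 - exp (- d)) / d \<le> 1 / R"
    using bopp_podolsky_kernel_le_inverse[of d] assms(2)
    by (auto intro: order.trans[OF _ divide_left_mono[of R d 1]])
  then have "(1 - exp (- d)) / d * a\<^sup>2 \<le> a\<^sup>2 / R"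
    by (metis mult_right_mono times_divide_eq_left mult_1 zero_le_power2)
  then show ?thesis
    using False by (simp add: add_increasing2)
qed

lemma phi_pot_le:
  fixes u :: "R3 \<Rightarrow> real" and x :: R3 and p R s :: real
  assumes u_meas: "u \<in> borel_measurable lebesgue" and u_L2: "integrable lebesgue (\<lambda>y. (u y)\<^sup>2)"
    and "2 \<le> p" and "0 < R" and "0 < s"
  shows "ennreal (phi_pot u x)
    \<le> ennreal ((LINT y|lebesgue. (u y)\<^sup>2) / R + s * (4/3 * R^3 * pi))
      + ennreal (s powr (1 - p/2)) * (\<integral>\<^sup>+ y. ennreal (\<bar>u y\<bar> powr p) \<partial>lebesgue)"
proof -
  let ?g = "\<lambda>y. (1 - exp (- dist x y)) / dist x y * (u y)\<^sup>2"
  let ?h = "\<lambda>y. (u y)\<^sup>2 / R + s * indicator (ball x R) y"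
  note [measurable] = u_meas
  have [measurable]: "dist x \<in> borel_measurable lebesgue"
    by (intro measurable_completion) (simp add: borel_measurable_continuous_onI continuous_on_dist)
  have [measurable]: "ball x R \<in> sets lebesgue"
    by simp
  have g_meas: "?g \<in> borel_measurable lebesgue"
    by measurable
  have g_bounds: "0 \<le> ?g y" "?g y \<le> (u y)\<^sup>2" for y
  proof -
    show "0 \<le> ?g y"
      using bopp_podolsky_kernel_nonneg[of "dist x y"] by simp
    have "?g y \<le> 1 * (u y)\<^sup>2"
      using bopp_podolsky_kernel_le_one[of "dist x y"] by (intro mult_right_mono) auto
    then show "?g y \<le> (u y)\<^sup>2"
      by simp
  qed
  have g_L1: "integrable lebesgue ?g"
    using g_bounds by (intro Bochner_Integration.integrable_bound[OF u_L2 g_meas]) auto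
  have ball_L1: "integrable lebesgue (indicat_real (ball x R))"
    using emeasure_lborel_ball_finite[of x R] by (intro integrable_real_indicator) auto
  have h_meas: "(\<lambda>y. ennreal (?h y)) \<in> borel_measurable lebesgue"
    by measurable
  have powr_meas: "(\<lambda>y. ennreal (\<bar>u y\<bar> powr p)) \<in> borel_measurable lebesgue"
    by measurable
  have h_L1: "integrable lebesgue ?h"
    using u_L2 ball_L1 by auto
  have h_integral: "(LINT y|lebesgue. ?h y) = (LINT y|lebesgue. (u y)\<^sup>2) / R + s * (4/3 * R^3 * pi)"
    using u_L2 ball_L1 assms(4) by (simp add: sphere_volume)
  have "ennreal (phi_pot u x) = (\<integral>\<^sup>+ y. ennreal (?g y) \<partial>lebesgue)"
    unfolding phi_pot_def using g_L1 g_bounds(1) by (intro nn_integral_eq_integral[symmetric]) auto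
  also have "\<dots> \<le> (\<integral>\<^sup>+ y. ennreal (?h y) + ennreal (s powr (1 - p/2)) * ennreal (\<bar>u y\<bar> powr p) \<partial>lebesgue)"
  proof (intro nn_integral_mono)
    fix y
    have "?g y \<le> ?h y + s powr (1 - p/2) * \<bar>u y\<bar> powr p"
      using bopp_podolsky_kernel_mult_square_le[of "dist x y" R s p "u y"] assms(3-5)
      by (cases "dist x y < R") (simp_all add: indicator_def dist_commute)
    then have "ennreal (?g y) \<le> ennreal (?h y + s powr (1 - p/2) * \<bar>u y\<bar> powr p)"
      by (rule ennreal_leI)
    also have "\<dots> = ennreal (?h y) + ennreal (s powr (1 - p/2)) * ennreal (\<bar>u y\<bar> powr p)"
      using assms(4,5) by (simp add: ennreal_plus ennreal_mult)
    finally show "ennreal (?g y) \<le> \<dots>" .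
  qed
  also have "\<dots> = (\<integral>\<^sup>+ y. ennreal (?h y) \<partial>lebesgue)
      + ennreal (s powr (1 - p/2)) * (\<integral>\<^sup>+ y. ennreal (\<bar>u y\<bar> powr p) \<partial>lebesgue)"
    using h_meas powr_meas by (simp add: nn_integral_add nn_integral_cmult)
  also have "(\<integral>\<^sup>+ y. ennreal (?h y) \<partial>lebesgue) = ennreal (LINT y|lebesgue. ?h y)"
    using h_L1 assms(4,5) by (intro nn_integral_eq_integral) auto
  finally show ?thesis
    unfolding h_integral .
qed

lemma phi_pot_normalized_nn_integral_powr_ge:
  fixes A p :: real
  assumes "2 \<le> p"
  obtains \<delta> where "0 < \<delta>"
    and "\<And>u. u \<in> borel_measurable lebesgue \<Longrightarrow> integrable lebesgue (\<lambda>x. (u x)\<^sup>2) \<Longrightarrow>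
      (LINT x|lebesgue. (u x)\<^sup>2) \<le> A \<Longrightarrow> (LINT x|lebesgue. phi_pot u x * (u x)\<^sup>2) = 1 \<Longrightarrow>
      ennreal \<delta> \<le> (\<integral>\<^sup>+ x. ennreal (\<bar>u x\<bar> powr p) \<partial>lebesgue)"
proof -
  define a where "a = max A 0 + 1"
  \<comment> \<open>\<open>R\<close>, \<open>s\<close> and \<open>\<delta>\<close> are chosen so that each of the three terms of \<open>B * a\<close> below is at most \<open>1/4\<close>\<close>
  define R where "R = 4 * a\<^sup>2"
  define s where "s = 3 / (16 * pi * R^3 * a)"
  define \<delta> where "\<delta> = s powr (p/2 - 1) / (4 * a)"
  have a_pos: "0 < a" and R_pos: "0 < R"
    by (auto simp: a_def R_def)
  then have s_pos: "0 < s"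
    by (simp add: s_def)
  have "0 < \<delta>"
    using a_pos s_pos by (simp add: \<delta>_def)
  moreover have "ennreal \<delta> \<le> (\<integral>\<^sup>+ x. ennreal (\<bar>u x\<bar> powr p) \<partial>lebesgue)"
    if u_meas: "u \<in> borel_measurable lebesgue" and u_L2: "integrable lebesgue (\<lambda>x. (u x)\<^sup>2)"
      and u_L2_le: "(LINT x|lebesgue. (u x)\<^sup>2) \<le> A"
      and u_normalized: "(LINT x|lebesgue. phi_pot u x * (u x)\<^sup>2) = 1" for u
  proof (rule ccontr)
    let ?P = "\<integral>\<^sup>+ x. ennreal (\<bar>u x\<bar> powr p) \<partial>lebesgue"
    let ?L2 = "LINT x|lebesgue. (u x)\<^sup>2"
    assume "\<not> ennreal \<delta> \<le> ?P"
    then obtain q where q: "?P = ennreal q" "0 \<le> q" "q < \<delta>"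
      using le_ennreal_iff[of \<delta> ?P] ennreal_less_iff \<open>0 < \<delta>\<close> by force
    have L2_bounds: "0 \<le> ?L2" "?L2 \<le> a"
      using u_L2_le by (auto simp: a_def)
    define B where "B = ?L2 / R + s * (4/3 * R^3 * pi) + s powr (1 - p/2) * q"
    have B_nonneg: "0 \<le> B"
      using L2_bounds R_pos s_pos q(2) by (simp add: B_def)
    have phi_le_B: "phi_pot u x \<le> B" for x
    proof -
      have "ennreal (phi_pot u x) \<le> ennreal B"
        using phi_pot_le[OF u_meas u_L2 assms R_pos s_pos, of x] L2_bounds R_pos s_pos q
        by (simp add: B_def ennreal_mult)
      then show ?thesis
        using B_nonneg by simp
    qed
    \<comment> \<open>A Bochner integral equal to 1 is that of an integrable function (non-integrable ones integrate to 0).\<close>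
    have "integrable lebesgue (\<lambda>x. phi_pot u x * (u x)\<^sup>2)"
      using u_normalized not_integrable_integral_eq by force
    then have "1 \<le> (LINT x|lebesgue. B * (u x)\<^sup>2)"
      unfolding u_normalized[symmetric] using u_L2 phi_le_B
      by (intro integral_mono) (auto intro: mult_right_mono)
    also have "\<dots> \<le> B * a"
      using L2_bounds B_nonneg by (simp add: mult_left_mono)
    also have "\<dots> < 1"
    proof -
      have "?L2 / R * a \<le> 1/4"
        using L2_bounds a_pos by (simp add: R_def power2_eq_square field_simps)
      moreover have "s * (4/3 * R^3 * pi) * a = 1/4"
        using R_pos a_pos by (simp add: s_def field_simps)
      moreover have "s powr (1 - p/2) * q * a < s powr (1 - p/2) * \<delta> * a"
        using q(3) a_pos s_pos by simp
      moreover have "s powr (1 - p/2) * \<delta> * a = 1/4"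
        using a_pos s_pos by (simp add: \<delta>_def field_simps flip: powr_add)
      ultimately show ?thesis
        by (simp add: B_def algebra_simps)
    qed
    finally show False
      by simp
  qed
  ultimately show ?thesis
    using that by blast
qed

theorem lemma2p4:
  fixes V :: "R3 \<Rightarrow> real" and \<epsilon> :: real and u :: "nat \<Rightarrow> R3 \<Rightarrow> real"
  assumes "Linf_loc V" and "ess_inf_pos V" and "\<epsilon> > 0"
    and "\<forall>n. u n \<in> M_set V \<epsilon>"
    and "\<exists>C. \<forall>n. W_norm_sq V \<epsilon> (u n) \<le> C"
  shows "\<not> ((\<lambda>n. \<integral>\<^sup>+ x. ennreal (\<bar>u n x\<bar> powr (12/5)) \<partial>lebesgue) \<longlonglongrightarrow> 0)"
proof
  assume lim: "(\<lambda>n. \<integral>\<^sup>+ x. ennreal (\<bar>u n x\<bar> powr (12/5)) \<partial>lebesgue) \<longlonglongrightarrow> 0"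
  obtain c where c_pos: "0 < c" and V_ge: "AE x in lebesgue. c \<le> V x"
    using assms(2) by (auto simp: ess_inf_pos_def)
  obtain C where C: "\<And>n. W_norm_sq V \<epsilon> (u n) \<le> C"
    using assms(5) by blast
  have u_meas: "u n \<in> borel_measurable lebesgue" and u_L2: "integrable lebesgue (\<lambda>x. (u n x)\<^sup>2)"
    and u_normalized: "(LINT x|lebesgue. phi_pot (u n) x * (u n x)\<^sup>2) = 1" for n
    using assms(4) by (auto simp: M_set_def W_space_def H1_def weak_gradient_def)
  have u_L2_le: "(LINT x|lebesgue. (u n x)\<^sup>2) \<le> C / c" for n
    using integral_square_le_W_norm_sq[OF V_ge, of \<epsilon> "u n"] C[of n] assms(3,4) c_pos
    by (auto simp: M_set_def field_simps mult.commute)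
  obtain \<delta> where "0 < \<delta>" and \<delta>_le: "\<And>n. ennreal \<delta> \<le> (\<integral>\<^sup>+ x. ennreal (\<bar>u n x\<bar> powr (12/5)) \<partial>lebesgue)"
    by (rule phi_pot_normalized_nn_integral_powr_ge[of "12/5" "C / c"])
      (simp, blast intro: u_meas u_L2 u_L2_le u_normalized)
  have "eventually (\<lambda>n. (\<integral>\<^sup>+ x. ennreal (\<bar>u n x\<bar> powr (12/5)) \<partial>lebesgue) < ennreal \<delta>) sequentially"
    using lim \<open>0 < \<delta>\<close> by (intro order_tendstoD) auto
  then obtain n where "(\<integral>\<^sup>+ x. ennreal (\<bar>u n x\<bar> powr (12/5)) \<partial>lebesgue) < ennreal \<delta>"
    by (auto simp: eventually_sequentially)
  with \<delta>_le[of n] show False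
    by (simp add: not_le[symmetric])
qed

end
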